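(* Let $L>0$ and $m>0$. Let $a:[-L,L]\to\mathbb{R}$ be a positive even function of class $C^1([-L,L])$, and let $G:\mathbb{R}\to\mathbb{R}$ be a nonnegative even $C^1$ function such that $f:=-G'$ is locally Lipschitz. Suppose that $$a'\ge 0 \text{ in } (0,L),\qquad G\ge G(m)\text{ in }(0,\infty),\qquad G'\le 0 \text{ in }(0,m).$$ Then the problem $$-(a u')' = a\, f(u)\ \text{ in } (-L,L),\qquad u(L)=-u(-L)=m,$$ admits a unique solution, which is therefore odd. Furthermore, this solution is increasing.
   Context: A solution is a function $u\in H^1((-L,L))$ (hence continuous on $[-L,L]$) satisfying the equation in the weak sense and the boundary conditions; such solutions are $C^2$ in $(-L,L)$ and satisfy the equation pointwise. *)

theory Defs
  imports "HOL-Analysis.Analysis"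
begin

definition loc_lipschitz :: "(real \<Rightarrow> real) \<Rightarrow> bool" where
  "loc_lipschitz f \<longleftrightarrow> (\<forall>x. \<exists>e>0. \<exists>K. K-lipschitz_on (ball x e) f)"

definition is_solution ::
  "real \<Rightarrow> real \<Rightarrow> (real \<Rightarrow> real) \<Rightarrow> (real \<Rightarrow> real) \<Rightarrow> (real \<Rightarrow> real) \<Rightarrow> bool" where
  "is_solution L m a f u \<longleftrightarrow>
     continuous_on {-L..L} u \<and> u L = m \<and> u (-L) = - m \<and>
     (\<exists>u'. (\<forall>x\<in>{-L<..<L}. (u has_real_derivative u' x) (at x)) \<and>
           (\<forall>x\<in>{-L<..<L}. ((\<lambda>y. a y * u' y) has_real_derivative (- (a x * f (u x)))) (at x)))"

end

theory Submission
  imports Defs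
begin

text \<open>With the flux w = a u' the equation becomes a first-order system with locally Lipschitz
  right-hand side, so a solution is determined by its value and flux at one point (Gronwall).
  Since a' \<ge> 0 on (0, L), the energy (w/a)^2/2 - G(u) decreases on [0, L); as G is minimal at m,
  a zero of w would put u at a critical point of G, making u constant. Hence w > 0 and every
  solution increases strictly. In the inverse coordinates t = u(x) one has (w^2)' = 2 a^2 g, with
  g \<le> 0 on (0, m) and a increasing on [0, L]; comparing inverses shows first u(0) = 0 (compare u
  with its reflection -u(-x)) and then that two solutions have the same flux at 0, so they
  coincide, and the reflection of the solution is the solution itself. Existence follows by
  shooting from -L for the nonlinearity truncated outside [-m, m], whose initial value problems
  are solved by Banach's fixed point theorem in a weighted sup norm; the truncated solution that
  reaches m at L never leaves [-m, m].\<close>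

lemma DERIV_even_imp_odd:
  fixes f :: "real \<Rightarrow> real"
  assumes "open S" "x \<in> S" and even: "\<And>y. y \<in> S \<Longrightarrow> - y \<in> S \<and> f (- y) = f y"
    and D: "(f has_real_derivative D) (at x)" and D': "(f has_real_derivative D') (at (- x))"
  shows "D' = - D"
proof -
  have "((\<lambda>y. f (- y)) has_real_derivative D' * (- 1)) (at x)"
    by (rule DERIV_chain2[where g="\<lambda>y. - y", OF D']) (auto intro!: derivative_eq_intros)
  then have "((\<lambda>y. f (- y)) has_real_derivative - D') (at x)" by simp
  then have "(f has_real_derivative - D') (at x)"
    by (rule has_field_derivative_transform_within_open[OF _ \<open>open S\<close> \<open>x \<in> S\<close>]) (use even in auto)
  from DERIV_unique[OF D this] show ?thesis by simp
qed

lemma loc_lipschitz_imp_lipschitz_on_compact: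
  assumes f: "loc_lipschitz f" and "compact S"
  obtains K where "K-lipschitz_on S f"
proof -
  have "local_lipschitz {0::real} S (\<lambda>_. f)"
  proof (rule local_lipschitzI)
    fix t x assume "x \<in> S"
    obtain e K where e: "e > 0" "K-lipschitz_on (ball x e) f"
      using f unfolding loc_lipschitz_def by blast
    have "K-lipschitz_on (cball x (e/2) \<inter> S) f"
      by (rule lipschitz_on_subset[OF e(2)]) (use e in \<open>auto simp: subset_iff\<close>)
    then show "\<exists>u>0. \<exists>K. \<forall>t\<in>cball t u \<inter> {0}. K-lipschitz_on (cball x u \<inter> S) f"
      using e by (intro exI[of _ "e/2"]) auto
  qed
  then obtain K where "\<And>t. t \<in> {0::real} \<Longrightarrow> K-lipschitz_on S f"
    by (rule local_lipschitz_compact_implies_lipschitz[OF _ \<open>compact S\<close>]) auto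
  then show ?thesis using that by blast
qed

lemma gronwall_le_zero:
  fixes h h' :: "real \<Rightarrow> real"
  assumes h': "\<And>y. y \<in> {p<..<q} \<Longrightarrow> (h has_real_derivative h' y) (at y)"
    and bound: "\<And>y. y \<in> {p<..<q} \<Longrightarrow> \<bar>h' y\<bar> \<le> C * h y"
    and x0: "x0 \<in> {p<..<q}" and x: "x \<in> {p<..<q}" and "h x0 = 0"
  shows "h x \<le> 0"
proof (cases "x0 \<le> x")
  case True
  have "exp (- C * x) * h x \<le> exp (- C * x0) * h x0"
  proof (rule DERIV_nonpos_imp_nonincreasing[OF True])
    fix y assume "x0 \<le> y" "y \<le> x"
    then have y: "y \<in> {p<..<q}" using x0 x by auto
    have "((\<lambda>y. exp (- C * y) * h y) has_real_derivative exp (- C * y) * (h' y - C * h y)) (at y)"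
      by (auto intro!: derivative_eq_intros h'[OF y] simp: algebra_simps)
    moreover have "exp (- C * y) * (h' y - C * h y) \<le> 0"
      using bound[OF y] by (intro mult_nonneg_nonpos) auto
    ultimately show "\<exists>d. ((\<lambda>y. exp (- C * y) * h y) has_real_derivative d) (at y) \<and> d \<le> 0"
      by blast
  qed
  then show ?thesis using \<open>h x0 = 0\<close> by (simp add: mult_le_0_iff)
next
  case False
  then have "x \<le> x0" by simp
  have "exp (C * x) * h x \<le> exp (C * x0) * h x0"
  proof (rule DERIV_nonneg_imp_nondecreasing[OF \<open>x \<le> x0\<close>])
    fix y assume "x \<le> y" "y \<le> x0"
    then have y: "y \<in> {p<..<q}" using x0 x by auto
    have "((\<lambda>y. exp (C * y) * h y) has_real_derivative exp (C * y) * (h' y + C * h y)) (at y)"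
      by (auto intro!: derivative_eq_intros h'[OF y] simp: algebra_simps)
    moreover have "0 \<le> exp (C * y) * (h' y + C * h y)"
      using bound[OF y] by (intro mult_nonneg_nonneg) auto
    ultimately show "\<exists>d. ((\<lambda>y. exp (C * y) * h y) has_real_derivative d) (at y) \<and> 0 \<le> d"
      by blast
  qed
  then show ?thesis using \<open>h x0 = 0\<close> by (simp add: mult_le_0_iff)
qed

lemma integral_has_real_derivative_at:
  fixes k :: "real \<Rightarrow> real"
  assumes "continuous_on {p..q} k" "x \<in> {p<..<q}"
  shows "((\<lambda>x. integral {p..x} k) has_real_derivative k x) (at x)"
proof -
  have "((\<lambda>x. integral {p..x} k) has_real_derivative k x) (at x within {p..q})"
    by (rule integral_has_real_derivative) (use assms in auto)
  moreover have "at x within {p..q} = at x" by (rule at_within_interior) (use assms in simp)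
  ultimately show ?thesis by simp
qed

lemma integral_exp_bound:
  fixes k :: "real \<Rightarrow> real"
  assumes "\<mu> > 0" "C \<ge> 0" "p \<le> y" "continuous_on {p..y} k"
    and bound: "\<And>t. t \<in> {p..y} \<Longrightarrow> \<bar>k t\<bar> \<le> C * exp (\<mu> * t)"
  shows "\<bar>integral {p..y} k\<bar> \<le> C * exp (\<mu> * y) / \<mu>"
proof -
  have primitive: "((\<lambda>t. C * exp (\<mu> * t)) has_integral
      (C * exp (\<mu> * y) / \<mu> - C * exp (\<mu> * p) / \<mu>)) {p..y}"
  proof (rule fundamental_theorem_of_calculus[OF \<open>p \<le> y\<close>])
    fix t
    have "((\<lambda>t. C * exp (\<mu> * t) / \<mu>) has_real_derivative C * exp (\<mu> * t)) (at t)"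
      using \<open>\<mu> > 0\<close> by (auto intro!: derivative_eq_intros)
    then show "((\<lambda>t. C * exp (\<mu> * t) / \<mu>) has_vector_derivative C * exp (\<mu> * t))
        (at t within {p..y})"
      by (simp add: has_real_derivative_iff_has_vector_derivative has_vector_derivative_at_within)
  qed
  have "norm (integral {p..y} k) \<le> integral {p..y} (\<lambda>t. C * exp (\<mu> * t))"
    by (rule integral_norm_bound_integral)
       (use assms primitive in \<open>auto intro: integrable_continuous_real has_integral_integrable\<close>)
  also have "\<dots> = C * exp (\<mu> * y) / \<mu> - C * exp (\<mu> * p) / \<mu>"
    by (rule integral_unique[OF primitive])
  also have "\<dots> \<le> C * exp (\<mu> * y) / \<mu>" using assms by simp
  finally show ?thesis by simp
qed

lemma fixed_points_dist_le:
  fixes T :: "'p \<Rightarrow> 'a::metric_space \<Rightarrow> 'a"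
  assumes "T s x = x" "T s' x' = x'" "c < 1"
    and contraction: "dist (T s x) (T s x') \<le> c * dist x x'"
    and parameter: "dist (T s x') (T s' x') \<le> M"
  shows "dist x x' \<le> M / (1 - c)"
proof -
  have "dist x x' \<le> dist (T s x) (T s x') + dist (T s x') (T s' x')"
    using dist_triangle[of "T s x" "T s' x'" "T s x'"] assms(1,2) by simp
  also have "\<dots> \<le> c * dist x x' + M" using contraction parameter by simp
  finally show ?thesis using \<open>c < 1\<close> by (simp add: field_simps)
qed

lemma abs_cross_terms_le:
  fixes p q r A :: real
  assumes "0 < \<alpha>" "\<alpha> \<le> A" "A \<le> \<beta>" "K \<ge> 0" "\<bar>r\<bar> \<le> K * \<bar>p\<bar>"
  shows "\<bar>2 * p * q / A - 2 * q * A * r\<bar> \<le> (1 / \<alpha> + \<beta> * K) * (p\<^sup>2 + q\<^sup>2)"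
proof -
  have sq: "2 * \<bar>p\<bar> * \<bar>q\<bar> \<le> p\<^sup>2 + q\<^sup>2"
    using sum_squares_bound[of "\<bar>p\<bar>" "\<bar>q\<bar>"] by (simp add: power2_eq_square)
  have "\<bar>2 * p * q / A\<bar> = 2 * \<bar>p\<bar> * \<bar>q\<bar> / A" using assms by (simp add: abs_mult)
  also have "\<dots> \<le> 2 * \<bar>p\<bar> * \<bar>q\<bar> / \<alpha>"
    using assms by (intro divide_left_mono) auto
  also have "\<dots> \<le> (p\<^sup>2 + q\<^sup>2) / \<alpha>"
    using assms sq by (intro divide_right_mono) auto
  finally have first: "\<bar>2 * p * q / A\<bar> \<le> (p\<^sup>2 + q\<^sup>2) / \<alpha>" .
  have "\<bar>2 * q * A * r\<bar> = A * \<bar>r\<bar> * (2 * \<bar>q\<bar>)" using assms by (simp add: abs_mult)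
  also have "\<dots> \<le> \<beta> * (K * \<bar>p\<bar>) * (2 * \<bar>q\<bar>)"
    using assms by (intro mult_mono) auto
  also have "\<dots> = \<beta> * K * (2 * \<bar>p\<bar> * \<bar>q\<bar>)" by simp
  also have "\<dots> \<le> \<beta> * K * (p\<^sup>2 + q\<^sup>2)"
    using assms sq by (intro mult_left_mono) auto
  finally have "\<bar>2 * q * A * r\<bar> \<le> \<beta> * K * (p\<^sup>2 + q\<^sup>2)" .
  then have "\<bar>2 * p * q / A - 2 * q * A * r\<bar> \<le> (p\<^sup>2 + q\<^sup>2) / \<alpha> + \<beta> * K * (p\<^sup>2 + q\<^sup>2)"
    using first abs_triangle_ineq4[of "2 * p * q / A" "2 * q * A * r"] by linarith
  also have "\<dots> = (1 / \<alpha> + \<beta> * K) * (p\<^sup>2 + q\<^sup>2)"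
    by (simp add: algebra_simps add_divide_distrib)
  finally show ?thesis .
qed

lemma first_nonpos_point:
  fixes D :: "real \<Rightarrow> real"
  assumes "continuous_on {p..q} D" "p \<le> q" "D p > 0" "D q \<le> 0"
  obtains \<tau> where "p < \<tau>" "\<tau> \<le> q" "D \<tau> \<le> 0" "\<And>s. p \<le> s \<Longrightarrow> s < \<tau> \<Longrightarrow> D s > 0"
proof -
  define Z where "Z = {p..q} \<inter> D -` {..0}"
  have "closed Z" unfolding Z_def by (rule continuous_closed_preimage[OF assms(1)]) auto
  then have "compact Z" unfolding Z_def
    by (meson bounded_Int bounded_closed_interval compact_eq_bounded_closed)
  moreover have "q \<in> Z" using assms unfolding Z_def by auto
  ultimately obtain \<tau> where \<tau>: "\<tau> \<in> Z" "\<And>s. s \<in> Z \<Longrightarrow> \<tau> \<le> s"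
    using compact_attains_inf[of Z] by blast
  show ?thesis
  proof (rule that)
    show "p < \<tau>" "\<tau> \<le> q" "D \<tau> \<le> 0" using \<tau>(1) assms(3) unfolding Z_def
      by (auto simp: order.order_iff_strict)
    show "D s > 0" if "p \<le> s" "s < \<tau>" for s
      using \<tau> that unfolding Z_def by force
  qed
qed

section \<open>The problem as a first-order system\<close>

locale symmetric_bvp =
  fixes L m :: real and a a' G g :: "real \<Rightarrow> real"
  assumes L_pos: "L > 0" and m_pos: "m > 0"
    and a_pos: "\<forall>x\<in>{-L..L}. a x > 0"
    and a_even: "\<forall>x\<in>{-L..L}. a (- x) = a x"
    and a_deriv: "\<forall>x\<in>{-L..L}. (a has_real_derivative a' x) (at x within {-L..L})"
    and G_deriv: "\<forall>x. (G has_real_derivative g x) (at x)"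
    and G_even: "\<forall>x. G (- x) = G x"
    and g_cont: "continuous_on UNIV g"
    and f_lip: "loc_lipschitz (\<lambda>x. - g x)"
    and a'_nonneg: "\<forall>x\<in>{0<..<L}. a' x \<ge> 0"
    and G_min: "\<forall>x>0. G x \<ge> G m"
    and g_nonpos: "\<forall>x\<in>{0<..<m}. g x \<le> 0"
begin

lemma a_pos_interior: "x \<in> {-L<..<L} \<Longrightarrow> a x > 0"
  using a_pos by auto

lemma a_continuous: "continuous_on {-L..L} a"
  using a_deriv by (auto simp: continuous_on_eq_continuous_within intro: DERIV_continuous)

lemma a_deriv_interior: "x \<in> {-L<..<L} \<Longrightarrow> (a has_real_derivative a' x) (at x)"
  using a_deriv[rule_format, of x] at_within_interior[of x "{-L..L}"] by (simp add: less_imp_le)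

lemma a_bounds:
  obtains \<alpha> \<beta> where "0 < \<alpha>" "\<And>x. x \<in> {-L..L} \<Longrightarrow> \<alpha> \<le> a x \<and> a x \<le> \<beta>"
proof -
  have ne: "{-L..L} \<noteq> {}" using L_pos by simp
  obtain x1 where "x1 \<in> {-L..L}" "\<forall>y\<in>{-L..L}. a x1 \<le> a y"
    using continuous_attains_inf[OF compact_Icc ne a_continuous] by blast
  moreover obtain x2 where "\<forall>y\<in>{-L..L}. a y \<le> a x2"
    using continuous_attains_sup[OF compact_Icc ne a_continuous] by blast
  ultimately show ?thesis using a_pos by (intro that[of "a x1" "a x2"]) auto
qed

lemma a'_odd: "x \<in> {-L<..<L} \<Longrightarrow> a' (- x) = - a' x"
  by (rule DERIV_even_imp_odd[of "{-L<..<L}" x a]) (use a_even a_deriv_interior in auto)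

lemma a'_nonneg_right: "0 \<le> x \<Longrightarrow> x < L \<Longrightarrow> a' x \<ge> 0"
  using a'_nonneg a'_odd[of 0] L_pos by (cases "x = 0") auto

lemma a_mono: assumes "0 \<le> x" "x \<le> y" "y \<le> L" shows "a x \<le> a y"
proof (rule DERIV_nonneg_imp_increasing_open[OF \<open>x \<le> y\<close>])
  show "continuous_on {x..y} a" using a_continuous
    by (rule continuous_on_subset) (use assms in auto)
qed (use assms a'_nonneg_right L_pos in \<open>auto intro!: exI[of _ "a' _"] a_deriv_interior\<close>)

lemma g_odd: "g (- x) = - g x"
  by (rule DERIV_even_imp_odd[of UNIV x G]) (use G_even G_deriv in auto)

lemma G_continuous: "continuous_on UNIV G"
  using G_deriv by (auto simp: continuous_on_eq_continuous_within intro: DERIV_continuous)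

lemma G_ge_G_m: "G x \<ge> G m"
proof -
  have "G 0 \<ge> G m"
  proof (rule continuous_ge_on_closure[of "{0<..}" G])
    show "continuous_on (closure {0<..}) G" using G_continuous continuous_on_subset by blast
  qed (use G_min in auto)
  then show ?thesis
    using G_min[rule_format, of x] G_min[rule_format, of "- x"] G_even[rule_format, of x]
    by (cases x "0::real" rule: linorder_cases) auto
qed

lemma g_eq_0_if_G_eq_G_m: "G c = G m \<Longrightarrow> g c = 0"
  by (rule DERIV_local_min[OF spec[OF G_deriv, of c], of 1]) (use G_ge_G_m in auto)

lemma g_m: "g m = 0" and g_minus_m: "g (- m) = 0"
  using g_eq_0_if_G_eq_G_m[of m] g_odd[of m] by auto

definition flux_system :: "(real \<Rightarrow> real) \<Rightarrow> (real \<Rightarrow> real) \<Rightarrow> (real \<Rightarrow> real) \<Rightarrow> bool" where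
  "flux_system u w \<phi> \<longleftrightarrow> (\<forall>x\<in>{-L<..<L}.
     (u has_real_derivative w x / a x) (at x) \<and> (w has_real_derivative - (a x * \<phi> (u x))) (at x))"

lemma flux_systemD:
  assumes "flux_system u w \<phi>" "x \<in> {-L<..<L}"
  shows "(u has_real_derivative w x / a x) (at x)"
    and "(w has_real_derivative - (a x * \<phi> (u x))) (at x)"
  using assms unfolding flux_system_def by auto

lemma flux_system_const: "\<phi> c = 0 \<Longrightarrow> flux_system (\<lambda>_. c) (\<lambda>_. 0) \<phi>"
  unfolding flux_system_def by (auto intro!: derivative_eq_intros)

lemma flux_system_unique:
  assumes sys: "flux_system u1 w1 \<phi>" "flux_system u2 w2 \<phi>"
    and lip: "K-lipschitz_on S \<phi>" "u1 ` {-L<..<L} \<subseteq> S" "u2 ` {-L<..<L} \<subseteq> S"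
    and x0: "x0 \<in> {-L<..<L}" "u1 x0 = u2 x0" "w1 x0 = w2 x0" and x: "x \<in> {-L<..<L}"
  shows "u1 x = u2 x \<and> w1 x = w2 x"
proof -
  obtain \<alpha> \<beta> where ab: "0 < \<alpha>" "\<And>x. x \<in> {-L..L} \<Longrightarrow> \<alpha> \<le> a x \<and> a x \<le> \<beta>"
    by (rule a_bounds) blast
  define h where "h y = (u1 y - u2 y)\<^sup>2 + (w1 y - w2 y)\<^sup>2" for y
  define h' where "h' y = 2 * (u1 y - u2 y) * (w1 y - w2 y) / a y
    - 2 * (w1 y - w2 y) * a y * (\<phi> (u1 y) - \<phi> (u2 y))" for y
  have "h x \<le> 0"
  proof (rule gronwall_le_zero[OF _ _ x0(1) x])
    fix y assume y: "y \<in> {-L<..<L}"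
    have "a y \<noteq> 0" using a_pos_interior[OF y] by simp
    show "(h has_real_derivative h' y) (at y)"
      unfolding h_def[abs_def] h'_def
      by (rule derivative_eq_intros flux_systemD[OF sys(1) y] flux_systemD[OF sys(2) y] refl)+
         (use \<open>a y \<noteq> 0\<close> in \<open>simp add: field_simps\<close>)
    have "\<bar>\<phi> (u1 y) - \<phi> (u2 y)\<bar> \<le> K * \<bar>u1 y - u2 y\<bar>"
      using lipschitz_onD[OF lip(1), of "u1 y" "u2 y"] lip(2,3) y
        by (simp add: dist_real_def image_subset_iff)
    then show "\<bar>h' y\<bar> \<le> (1 / \<alpha> + \<beta> * K) * h y"
      unfolding h'_def h_def using ab y lipschitz_on_nonneg[OF lip(1)]
      by (intro abs_cross_terms_le) auto
  qed (use x0 in \<open>simp add: h_def\<close>)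
  then show ?thesis unfolding h_def by (simp add: sum_power2_le_zero_iff)
qed

lemma flux_zero_imp_constant:
  assumes u: "continuous_on {-L..L} u" "flux_system u w \<phi>" "K-lipschitz_on (u ` {-L..L}) \<phi>"
    and x0: "x0 \<in> {-L<..<L}" "w x0 = 0" "\<phi> (u x0) = 0" and x: "x \<in> {-L..L}"
  shows "u x = u x0"
proof -
  have "u y = u x0" if y: "y \<in> {-L<..<L}" for y
  proof -
    have "u ` {-L<..<L} \<subseteq> u ` {-L..L}" "(\<lambda>_. u x0) ` {-L<..<L} \<subseteq> u ` {-L..L}"
      using x0(1) by auto
    from flux_system_unique[OF u(2) flux_system_const[where \<phi>=\<phi>, OF x0(3)] u(3) this x0(1) _ _ y]
    show ?thesis using x0(2) by simp
  qed
  moreover have "closure {-L<..<L} = {-L..L}" using L_pos by simp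
  ultimately show ?thesis
    using continuous_constant_on_closure[of "{-L<..<L}" u "u x0" x] u(1) x by simp
qed

definition bvp_solution :: "(real \<Rightarrow> real) \<Rightarrow> (real \<Rightarrow> real) \<Rightarrow> bool" where
  "bvp_solution u w \<longleftrightarrow>
     continuous_on {-L..L} u \<and> u L = m \<and> u (-L) = - m \<and> flux_system u w (\<lambda>x. - g x)"

lemma is_solution_iff_bvp_solution:
  "is_solution L m a (\<lambda>x. - g x) u \<longleftrightarrow> (\<exists>w. bvp_solution u w)"
proof
  assume "is_solution L m a (\<lambda>x. - g x) u"
  then obtain u' where u: "continuous_on {-L..L} u" "u L = m" "u (-L) = - m"
    and u': "\<forall>x\<in>{-L<..<L}. (u has_real_derivative u' x) (at x)"
    and flux: "\<forall>x\<in>{-L<..<L}. ((\<lambda>y. a y * u' y) has_real_derivative - (a x * - g (u x))) (at x)"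
    unfolding is_solution_def by blast
  have "flux_system u (\<lambda>y. a y * u' y) (\<lambda>x. - g x)"
    unfolding flux_system_def
  proof
    fix x assume x: "x \<in> {-L<..<L}"
    have "a x * u' x / a x = u' x" using a_pos_interior[OF x] by simp
    then show "(u has_real_derivative a x * u' x / a x) (at x) \<and>
        ((\<lambda>y. a y * u' y) has_real_derivative - (a x * - g (u x))) (at x)"
      using u' flux x by simp
  qed
  then show "\<exists>w. bvp_solution u w" using u unfolding bvp_solution_def by blast
next
  assume "\<exists>w. bvp_solution u w"
  then obtain w where u: "continuous_on {-L..L} u" "u L = m" "u (-L) = - m"
    and sys: "flux_system u w (\<lambda>x. - g x)"
    unfolding bvp_solution_def by blast
  have "((\<lambda>y. a y * (w y / a y)) has_real_derivative - (a x * - g (u x))) (at x)"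
    if x: "x \<in> {-L<..<L}" for x
    by (rule has_field_derivative_transform_within_open[OF flux_systemD(2)[OF sys x],
          of "{-L<..<L}"])
       (use x a_pos_interior in \<open>auto simp: less_imp_neq[symmetric]\<close>)
  then show "is_solution L m a (\<lambda>x. - g x) u"
    unfolding is_solution_def using u flux_systemD(1)[OF sys]
    by (intro conjI exI[of _ "\<lambda>y. w y / a y"]) auto
qed

lemma bvp_solution_reflect:
  assumes "bvp_solution u w"
  shows "bvp_solution (\<lambda>x. - u (- x)) (\<lambda>x. w (- x))"
proof -
  have u: "continuous_on {-L..L} u" "u L = m" "u (-L) = - m"
    and sys: "flux_system u w (\<lambda>x. - g x)"
    using assms unfolding bvp_solution_def by auto
  have "continuous_on {-L..L} (\<lambda>x. u (- x))"
    by (rule continuous_on_compose2[OF u(1)]) (auto intro!: continuous_intros)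
  then have cont: "continuous_on {-L..L} (\<lambda>x. - u (- x))" by (intro continuous_intros)
  have "flux_system (\<lambda>x. - u (- x)) (\<lambda>x. w (- x)) (\<lambda>x. - g x)"
    unfolding flux_system_def
  proof
    fix x assume x: "x \<in> {-L<..<L}"
    then have "- x \<in> {-L<..<L}" by auto
    note d = flux_systemD[OF sys this]
    have "((\<lambda>x. - u (- x)) has_real_derivative - (w (- x) / a (- x) * (- 1))) (at x)"
      by (rule derivative_eq_intros DERIV_chain2[where g="\<lambda>y. - y", OF d(1)] | simp)+
    moreover have "((\<lambda>x. w (- x)) has_real_derivative - (a (- x) * - g (u (- x))) * (- 1)) (at x)"
      by (rule DERIV_chain2[where g="\<lambda>y. - y", OF d(2)]) (auto intro!: derivative_eq_intros)
    ultimately show "((\<lambda>x. - u (- x)) has_real_derivative w (- x) / a x) (at x) \<and>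
        ((\<lambda>x. w (- x)) has_real_derivative - (a x * - g (- u (- x)))) (at x)"
      using a_even x g_odd by simp
  qed
  with cont u(2,3) show ?thesis unfolding bvp_solution_def by simp
qed

lemma lipschitz_on_images:
  assumes "continuous_on {-L..L} u" "continuous_on {-L..L} v"
  obtains K where "K-lipschitz_on (u ` {-L..L} \<union> v ` {-L..L}) (\<lambda>x. - g x)"
proof -
  have "compact (u ` {-L..L} \<union> v ` {-L..L})"
    by (intro compact_Un compact_continuous_image assms compact_Icc)
  then show ?thesis using loc_lipschitz_imp_lipschitz_on_compact[OF f_lip] that by blast
qed

section \<open>Monotonicity of solutions\<close>

definition energy :: "(real \<Rightarrow> real) \<Rightarrow> (real \<Rightarrow> real) \<Rightarrow> real \<Rightarrow> real" where
  "energy u w x = (w x / a x)\<^sup>2 / 2 - G (u x)"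

lemma energy_deriv:
  assumes sys: "flux_system u w (\<lambda>x. - g x)" and x: "x \<in> {-L<..<L}"
  shows "(energy u w has_real_derivative - a' x * (w x)\<^sup>2 / (a x) ^ 3) (at x)"
proof -
  have "a x \<noteq> 0" using a_pos_interior[OF x] by simp
  have G': "(G has_real_derivative g y) (at y)" for y using G_deriv by blast
  show ?thesis unfolding energy_def[abs_def]
    by (rule derivative_eq_intros flux_systemD[OF sys x] a_deriv_interior[OF x]
        DERIV_chain2[where f=G, OF G'] refl | simp add: \<open>a x \<noteq> 0\<close>)+
       (use \<open>a x \<noteq> 0\<close> in \<open>simp add: field_simps power2_eq_square power3_eq_cube\<close>)
qed

lemma energy_antimono:
  assumes sys: "flux_system u w (\<lambda>x. - g x)" and "0 \<le> x0" "x0 \<le> x" "x < L"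
  shows "energy u w x \<le> energy u w x0"
proof (rule DERIV_nonpos_imp_nonincreasing[OF \<open>x0 \<le> x\<close>])
  fix y assume "x0 \<le> y" "y \<le> x"
  then have y: "y \<in> {-L<..<L}" "0 \<le> y" using assms L_pos by auto
  have "- a' y * (w y)\<^sup>2 / (a y) ^ 3 \<le> 0"
    using a'_nonneg_right[of y] y a_pos_interior[OF y(1)] by (simp add: divide_nonpos_pos)
  then show "\<exists>d. (energy u w has_real_derivative d) (at y) \<and> d \<le> 0"
    using energy_deriv[OF sys y(1)] by blast
qed

lemma flux_nonzero_right:
  assumes sol: "bvp_solution u w" and x0: "0 \<le> x0" "x0 < L"
  shows "w x0 \<noteq> 0"
proof
  assume "w x0 = 0"
  have u: "continuous_on {-L..L} u" "u L = m" "u (-L) = - m"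
    and sys: "flux_system u w (\<lambda>x. - g x)"
    using sol unfolding bvp_solution_def by auto
  have "G (u x0) \<le> G (u L)"
  proof (rule continuous_ge_on_closure[of "{x0<..<L}" "\<lambda>x. G (u x)"])
    show "continuous_on (closure {x0<..<L}) (\<lambda>x. G (u x))"
      using continuous_on_compose2[OF G_continuous u(1)] x0 by (auto intro: continuous_on_subset)
    show "L \<in> closure {x0<..<L}" using x0 by simp
    fix x assume "x \<in> {x0<..<L}"
    then have "energy u w x \<le> energy u w x0" by (intro energy_antimono[OF sys]) (use x0 in auto)
    moreover have "energy u w x0 = - G (u x0)" using \<open>w x0 = 0\<close> unfolding energy_def by simp
    moreover have "energy u w x \<ge> - G (u x)" unfolding energy_def by simp
    ultimately show "G (u x0) \<le> G (u x)" by simp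
  qed
  then have "g (u x0) = 0" using G_ge_G_m[of "u x0"] u(2) by (intro g_eq_0_if_G_eq_G_m) simp
  moreover obtain K where "K-lipschitz_on (u ` {-L..L}) (\<lambda>x. - g x)"
    using lipschitz_on_images[OF u(1) u(1)] by auto
  ultimately have "u x = u x0" if "x \<in> {-L..L}" for x
    using flux_zero_imp_constant[OF u(1) sys _ _ \<open>w x0 = 0\<close> _ that] x0 L_pos by auto
  then have "u L = u (-L)" using L_pos by simp
  then show False using u(2,3) m_pos by simp
qed

lemma flux_nonzero:
  assumes sol: "bvp_solution u w" and x: "x \<in> {-L<..<L}"
  shows "w x \<noteq> 0"
proof (cases "0 \<le> x")
  case True
  then show ?thesis using flux_nonzero_right[OF sol] x by simp
next
  case False
  then show ?thesis using flux_nonzero_right[OF bvp_solution_reflect[OF sol], of "- x"] x by simp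
qed

lemma flux_pos:
  assumes sol: "bvp_solution u w" and x: "x \<in> {-L<..<L}"
  shows "w x > 0"
proof -
  have u: "continuous_on {-L..L} u" "u L = m" "u (-L) = - m"
    and sys: "flux_system u w (\<lambda>x. - g x)"
    using sol unfolding bvp_solution_def by auto
  have diff: "u differentiable (at y)" if "-L < y" "y < L" for y
    using flux_systemD(1)[OF sys, of y] that real_differentiable_def by auto
  obtain d p where p: "-L < p" "p < L" and d: "(u has_real_derivative d) (at p)"
    and mvt: "u L - u (-L) = (L - - L) * d"
    using MVT[of "-L" L u] L_pos u(1) diff by auto
  have "d = w p / a p" using DERIV_unique[OF d flux_systemD(1)[OF sys]] p by simp
  moreover have "0 < (2 * L) * d" using mvt u(2,3) m_pos by simp
  ultimately have "w p > 0"
    using L_pos a_pos_interior[of p] p by (simp add: zero_less_mult_iff zero_less_divide_iff)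
  have "continuous_on {-L<..<L} w"
    using flux_systemD(2)[OF sys] by (meson DERIV_isCont continuous_at_imp_continuous_on)
  then have "connected (w ` {-L<..<L})" by (rule connected_continuous_image) simp
  moreover have "w x \<in> w ` {-L<..<L}" "w p \<in> w ` {-L<..<L}" using x p by auto
  ultimately have "w x \<le> 0 \<Longrightarrow> 0 \<in> w ` {-L<..<L}"
    using \<open>w p > 0\<close> unfolding connected_iff_interval by (meson less_imp_le)
  then show ?thesis using flux_nonzero[OF sol] by force
qed

lemma bvp_solution_strict_mono:
  assumes sol: "bvp_solution u w"
  shows "strict_mono_on {-L..L} u"
proof (rule strict_mono_onI)
  fix p q assume pq: "p \<in> {-L..L}" "q \<in> {-L..L}" "p < q"
  have u: "continuous_on {-L..L} u" and sys: "flux_system u w (\<lambda>x. - g x)"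
    using sol unfolding bvp_solution_def by auto
  show "u p < u q"
  proof (rule DERIV_pos_imp_increasing_open[OF pq(3)])
    show "continuous_on {p..q} u" using u by (rule continuous_on_subset) (use pq in auto)
    fix y assume "p < y" "y < q"
    then have y: "y \<in> {-L<..<L}" using pq by auto
    have "w y / a y > 0" using flux_pos[OF sol y] a_pos_interior[OF y] by simp
    then show "\<exists>d. (u has_real_derivative d) (at y) \<and> 0 < d" using flux_systemD(1)[OF sys y]
      by blast
  qed
qed

lemma bvp_solution_image:
  assumes sol: "bvp_solution u w"
  shows "u ` {-L..L} = {-m..m}"
proof
  have u: "continuous_on {-L..L} u" "u L = m" "u (-L) = - m"
    using sol unfolding bvp_solution_def by auto
  show "u ` {-L..L} \<subseteq> {-m..m}"
    using strict_mono_on_leD[OF bvp_solution_strict_mono[OF sol]] u(2,3) L_pos by fastforce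
  show "{-m..m} \<subseteq> u ` {-L..L}"
    using IVT'[of u "-L" _ L] u L_pos by fastforce
qed

section \<open>Symmetry and uniqueness\<close>

definition inv_sol :: "(real \<Rightarrow> real) \<Rightarrow> real \<Rightarrow> real" where
  "inv_sol u = inv_into {-L..L} u"

context
  fixes u w assumes sol: "bvp_solution u w"
begin

lemma inv_sol_in: "t \<in> {-m..m} \<Longrightarrow> inv_sol u t \<in> {-L..L}"
  using bvp_solution_image[OF sol] inv_into_into[of t u "{-L..L}"] unfolding inv_sol_def by simp

lemma u_inv_sol: "t \<in> {-m..m} \<Longrightarrow> u (inv_sol u t) = t"
  using bvp_solution_image[OF sol] f_inv_into_f[of t u "{-L..L}"] unfolding inv_sol_def by simp

lemma inv_sol_u: "x \<in> {-L..L} \<Longrightarrow> inv_sol u (u x) = x"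
  unfolding inv_sol_def
  by (rule inv_into_f_f[OF strict_mono_on_imp_inj_on[OF bvp_solution_strict_mono[OF sol]]])

lemma inv_sol_mono:
  assumes "s \<in> {-m..m}" "t \<in> {-m..m}" "s \<le> t"
  shows "inv_sol u s \<le> inv_sol u t"
proof (rule ccontr)
  assume "\<not> inv_sol u s \<le> inv_sol u t"
  then have "u (inv_sol u t) < u (inv_sol u s)"
    using strict_mono_onD[OF bvp_solution_strict_mono[OF sol]] inv_sol_in assms by simp
  then show False using u_inv_sol assms by simp
qed

lemma inv_sol_continuous: "continuous_on {-m..m} (inv_sol u)"
  using continuous_on_inv[of "{-L..L}" u "inv_sol u"] sol inv_sol_u bvp_solution_image[OF sol]
  unfolding bvp_solution_def by auto

lemma inv_sol_interior: "t \<in> {-m<..<m} \<Longrightarrow> inv_sol u t \<in> {-L<..<L}"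
  using inv_sol_in[of t] u_inv_sol[of t] sol unfolding bvp_solution_def
  by (cases "inv_sol u t = L \<or> inv_sol u t = -L") auto

lemma inv_sol_deriv:
  assumes t: "t \<in> {-m<..<m}"
  shows "(inv_sol u has_real_derivative a (inv_sol u t) / w (inv_sol u t)) (at t)"
proof -
  have x: "inv_sol u t \<in> {-L<..<L}" by (rule inv_sol_interior[OF t])
  have "(u has_real_derivative w (inv_sol u t) / a (inv_sol u t)) (at (inv_sol u t))"
    using sol x unfolding bvp_solution_def flux_system_def by auto
  moreover have "w (inv_sol u t) / a (inv_sol u t) \<noteq> 0"
    using flux_pos[OF sol x] a_pos_interior[OF x] by simp
  moreover have "isCont (inv_sol u) t"
    by (rule continuous_on_interior[OF inv_sol_continuous]) (use t in simp)
  ultimately have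
    "(inv_sol u has_real_derivative inverse (w (inv_sol u t) / a (inv_sol u t))) (at t)"
    by (intro DERIV_inverse_function[where f=u and a="-m" and b=m]) (use t u_inv_sol in auto)
  then show ?thesis by simp
qed

lemma flux_sq_inv_sol_deriv:
  assumes t: "t \<in> {-m<..<m}"
  shows "((\<lambda>t. (w (inv_sol u t))\<^sup>2) has_real_derivative 2 * (a (inv_sol u t))\<^sup>2 * g t) (at t)"
proof -
  define x where "x = inv_sol u t"
  have x: "x \<in> {-L<..<L}" unfolding x_def by (rule inv_sol_interior[OF t])
  have "(w has_real_derivative - (a x * - g (u x))) (at x)"
    using sol x unfolding bvp_solution_def flux_system_def by auto
  then have "(w has_real_derivative a x * g t) (at x)" using u_inv_sol[of t] t by (simp add: x_def)
  from DERIV_chain2[OF this[unfolded x_def] inv_sol_deriv[OF t], folded x_def]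
  have "((\<lambda>t. (w (inv_sol u t))\<^sup>2) has_real_derivative 2 * w x * (a x * g t * (a x / w x))) (at t)"
    by (auto intro!: derivative_eq_intros simp: x_def)
  moreover have "w x \<noteq> 0" using flux_pos[OF sol x] by simp
  ultimately show ?thesis unfolding x_def[symmetric] by (simp add: field_simps power2_eq_square)
qed

end

lemma flux_inv_sol_le:
  assumes sol1: "bvp_solution u1 w1" and sol2: "bvp_solution u2 w2"
    and s: "0 < t0" "t0 \<le> s" "s < m"
    and a_le: "\<And>y. t0 \<le> y \<Longrightarrow> y \<le> s \<Longrightarrow> a (inv_sol u1 y) \<le> a (inv_sol u2 y)"
    and flux0: "(w2 (inv_sol u2 t0))\<^sup>2 \<le> (w1 (inv_sol u1 t0))\<^sup>2"
  shows "w2 (inv_sol u2 s) \<le> w1 (inv_sol u1 s)"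
proof -
  define W1 W2 where "W1 t = w1 (inv_sol u1 t)" and "W2 t = w2 (inv_sol u2 t)" for t
  have "(W1 t0)\<^sup>2 - (W2 t0)\<^sup>2 \<le> (W1 s)\<^sup>2 - (W2 s)\<^sup>2"
  proof (rule DERIV_nonneg_imp_nondecreasing[OF s(2)])
    fix y assume y: "t0 \<le> y" "y \<le> s"
    then have yl: "y \<in> {-m<..<m}" using s by auto
    have "(a (inv_sol u1 y))\<^sup>2 \<le> (a (inv_sol u2 y))\<^sup>2"
      using a_le[OF y] a_pos_interior[OF inv_sol_interior[OF sol1 yl]] by (intro power_mono) auto
    moreover have "g y \<le> 0" using g_nonpos y s by auto
    ultimately have "0 \<le> 2 * (a (inv_sol u1 y))\<^sup>2 * g y - 2 * (a (inv_sol u2 y))\<^sup>2 * g y"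
      by (simp add: mult_nonpos_nonpos flip: left_diff_distrib)
    then show "\<exists>d. ((\<lambda>t. (W1 t)\<^sup>2 - (W2 t)\<^sup>2) has_real_derivative d) (at y) \<and> 0 \<le> d"
      using DERIV_diff[OF flux_sq_inv_sol_deriv[OF sol1 yl] flux_sq_inv_sol_deriv[OF sol2 yl]]
      unfolding W1_def W2_def by blast
  qed
  then have sq: "(W2 s)\<^sup>2 \<le> (W1 s)\<^sup>2" using flux0 unfolding W1_def W2_def by simp
  have "s \<in> {-m<..<m}" using s by auto
  then have "W1 s > 0" "W2 s > 0"
    using flux_pos[OF sol1 inv_sol_interior[OF sol1]] flux_pos[OF sol2 inv_sol_interior[OF sol2]]
    unfolding W1_def W2_def by auto
  with sq show ?thesis unfolding W1_def W2_def by (simp add: power2_le_iff_abs_le)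
qed

text \<open>The comparison principle behind both symmetry and uniqueness. While the second inverse
  lies to the right of the first, a is larger along it, so by flux_inv_sol_le its flux is the
  smaller one and it moves right at least as fast; the two inverses cannot both reach L at m.\<close>
lemma inv_sol_comparison:
  assumes sol1: "bvp_solution u1 w1" and sol2: "bvp_solution u2 w2"
    and t0: "0 < t0" "t0 < m" "0 \<le> inv_sol u1 t0" "inv_sol u1 t0 < inv_sol u2 t0"
    and flux0: "(w2 (inv_sol u2 t0))\<^sup>2 \<le> (w1 (inv_sol u1 t0))\<^sup>2"
  shows False
proof -
  define X1 X2 where "X1 = inv_sol u1" and "X2 = inv_sol u2"
  define D where "D t = X2 t - X1 t" for t
  have D_cont: "continuous_on {t0..m} D" unfolding D_def X1_def X2_def
    by (intro continuous_intros continuous_on_subset[OF inv_sol_continuous[OF sol1]]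
        continuous_on_subset[OF inv_sol_continuous[OF sol2]]) (use t0 in auto)
  moreover have "D m = 0"
    using inv_sol_u[OF sol1, of L] inv_sol_u[OF sol2, of L] sol1 sol2 L_pos
    unfolding D_def X1_def X2_def bvp_solution_def by simp
  moreover have "D t0 > 0" using t0 unfolding D_def X1_def X2_def by simp
  ultimately obtain \<tau> where \<tau>: "t0 < \<tau>" "\<tau> \<le> m" "D \<tau> \<le> 0"
    and ordered: "\<And>s. t0 \<le> s \<Longrightarrow> s < \<tau> \<Longrightarrow> D s > 0"
    using first_nonpos_point[of t0 m D] t0 by auto
  have a_le: "a (X1 s) \<le> a (X2 s)" if "t0 \<le> s" "s < \<tau>" for s
  proof (rule a_mono)
    show "0 \<le> X1 s" using t0 inv_sol_mono[OF sol1, of t0 s] that \<tau> unfolding X1_def by auto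
    show "X1 s \<le> X2 s" "X2 s \<le> L" using ordered[OF that] inv_sol_in[OF sol2, of s] that \<tau> t0
      unfolding D_def X2_def by auto
  qed
  have "D t0 \<le> D \<tau>"
  proof (rule DERIV_nonneg_imp_increasing_open[OF less_imp_le[OF \<tau>(1)]])
    show "continuous_on {t0..\<tau>} D" using D_cont by (rule continuous_on_subset) (use \<tau> in auto)
    fix y assume y: "t0 < y" "y < \<tau>"
    then have yl: "y \<in> {-m<..<m}" using \<tau> t0 by auto
    have "(D has_real_derivative a (X2 y) / w2 (X2 y) - a (X1 y) / w1 (X1 y)) (at y)"
      unfolding D_def X1_def X2_def
        by (intro DERIV_diff inv_sol_deriv[OF sol2 yl] inv_sol_deriv[OF sol1 yl])
    moreover have "w2 (X2 y) \<le> w1 (X1 y)"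
      using flux_inv_sol_le[OF sol1 sol2 t0(1) _ _ _ flux0, of y] a_le y \<tau> unfolding X1_def X2_def
      by auto
    then have "a (X1 y) / w1 (X1 y) \<le> a (X2 y) / w2 (X2 y)"
      using a_le[of y] y flux_pos[OF sol2 inv_sol_interior[OF sol2 yl]]
        a_pos_interior[OF inv_sol_interior[OF sol1 yl]] unfolding X1_def X2_def
      by (intro frac_le) auto
    ultimately show "\<exists>d. (D has_real_derivative d) (at y) \<and> 0 \<le> d" by auto
  qed
  then show False using ordered[of t0] \<tau> by simp
qed

text \<open>As g is odd, the t-derivative of W(t)^2 - W(-t)^2, W = w \<circ> inv_sol u, is
  2 g(t) (a(inv_sol u t)^2 - a(inv_sol u (-t))^2), which is \<le> 0 while inv_sol u (-t) \<ge> 0.\<close>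
lemma flux_sq_inv_sol_reflect_le:
  assumes sol: "bvp_solution u w" and c: "0 \<le> c" "c < m" "0 \<le> inv_sol u (- c)"
  shows "(w (inv_sol u c))\<^sup>2 \<le> (w (inv_sol u (- c)))\<^sup>2"
proof -
  define X where "X = inv_sol u"
  define R where "R t = (w (X t))\<^sup>2 - (w (X (- t)))\<^sup>2" for t
  have "R c \<le> R 0"
  proof (rule DERIV_nonpos_imp_nonincreasing[OF c(1)])
    fix y assume y: "0 \<le> y" "y \<le> c"
    have yl: "y \<in> {-m<..<m}" "- y \<in> {-m<..<m}" using y c by auto
    have "((\<lambda>t. (w (X (- t)))\<^sup>2) has_real_derivative 2 * (a (X (- y)))\<^sup>2 * g (- y) * (- 1)) (at y)"
      unfolding X_def
      by (rule DERIV_chain2[where f="\<lambda>t. (w (inv_sol u t))\<^sup>2" and g="\<lambda>t. - t",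
          OF flux_sq_inv_sol_deriv[OF sol yl(2)]]) (auto intro!: derivative_eq_intros)
    then have "(R has_real_derivative 2 * g y * ((a (X y))\<^sup>2 - (a (X (- y)))\<^sup>2)) (at y)"
      unfolding R_def[abs_def]
        using DERIV_diff[OF flux_sq_inv_sol_deriv[OF sol yl(1), folded X_def]]
      by (simp add: g_odd algebra_simps)
    moreover have "g y \<le> 0" using g_nonpos g_odd[of 0] y c by (cases "y = 0") auto
    moreover have "(a (X (- y)))\<^sup>2 \<le> (a (X y))\<^sup>2"
    proof -
      have "0 \<le> X (- y)" using c inv_sol_mono[OF sol, of "- c" "- y"] y unfolding X_def by auto
      moreover have "X (- y) \<le> X y" "X y \<le> L"
        using inv_sol_mono[OF sol, of "- y" y] inv_sol_in[OF sol, of y] y c unfolding X_def by auto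
      ultimately show ?thesis
        using a_mono a_pos_interior[OF inv_sol_interior[OF sol yl(2)]] unfolding X_def
        by (intro power_mono) auto
    qed
    ultimately have "2 * g y * ((a (X y))\<^sup>2 - (a (X (- y)))\<^sup>2) \<le> 0"
      by (simp add: mult_nonpos_nonneg)
    then show "\<exists>d. (R has_real_derivative d) (at y) \<and> d \<le> 0"
      using \<open>(R has_real_derivative _) (at y)\<close> by blast
  qed
  then show ?thesis unfolding R_def X_def by simp
qed

text \<open>If c = u(0) > 0, compare u with its reflection v at level c: there
  inv_sol u c = 0 < inv_sol v c, and the flux of v is the smaller one by the previous lemma.\<close>
lemma bvp_solution_center_nonpos:
  assumes sol: "bvp_solution u w"
  shows "u 0 \<le> 0"
proof (rule ccontr)
  define c where "c = u 0"
  assume "\<not> u 0 \<le> 0"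
  then have "0 < c" unfolding c_def by simp
  have "c < m"
    using strict_mono_onD[OF bvp_solution_strict_mono[OF sol], of 0 L] sol L_pos
    unfolding c_def bvp_solution_def by simp
  define v wv where "v x = - u (- x)" and "wv x = w (- x)" for x
  have solv: "bvp_solution v wv"
    unfolding v_def[abs_def] wv_def[abs_def] by (rule bvp_solution_reflect[OF sol])
  have zero: "0 \<in> {-L..L}" using L_pos by simp
  have Xu: "inv_sol u c = 0" using inv_sol_u[OF sol zero] unfolding c_def .
  have Xv: "inv_sol v (- c) = 0" using inv_sol_u[OF solv zero] unfolding v_def c_def by simp
  have "inv_sol v (- c) \<le> inv_sol v c" using inv_sol_mono[OF solv, of "- c" c] \<open>0 < c\<close> \<open>c < m\<close>
    by simp
  moreover have "inv_sol v c \<noteq> 0"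
    using u_inv_sol[OF solv, of c] \<open>0 < c\<close> \<open>c < m\<close> unfolding v_def c_def by auto
  ultimately have "inv_sol u c < inv_sol v c" using Xu Xv by simp
  moreover have "(wv (inv_sol v c))\<^sup>2 \<le> (w (inv_sol u c))\<^sup>2"
    using flux_sq_inv_sol_reflect_le[OF solv, of c] \<open>0 < c\<close> \<open>c < m\<close> Xu Xv unfolding wv_def by simp
  ultimately show False
    using inv_sol_comparison[OF sol solv \<open>0 < c\<close> \<open>c < m\<close>] Xu by simp
qed

lemma bvp_solution_center:
  assumes sol: "bvp_solution u w"
  shows "u 0 = 0"
  using bvp_solution_center_nonpos[OF sol]
    bvp_solution_center_nonpos[OF bvp_solution_reflect[OF sol]]
  by simp

text \<open>If w1(0) > w2(0), then slightly above level 0 the inverse of u2 already lies to the right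
  of that of u1 while its flux is still the smaller one.\<close>
lemma bvp_solution_center_flux_le:
  assumes sol1: "bvp_solution u1 w1" and sol2: "bvp_solution u2 w2"
  shows "w1 0 \<le> w2 0"
proof (rule ccontr)
  assume "\<not> w1 0 \<le> w2 0"
  define X1 X2 where "X1 = inv_sol u1" and "X2 = inv_sol u2"
  have zero: "0 \<in> {-L..L}" "0 \<in> {-L<..<L}" "(0::real) \<in> {-m<..<m}" using L_pos m_pos by auto
  have X0: "X1 0 = 0" "X2 0 = 0"
    using inv_sol_u[OF sol1 zero(1)] inv_sol_u[OF sol2 zero(1)] bvp_solution_center[OF sol1]
      bvp_solution_center[OF sol2] unfolding X1_def X2_def by simp_all
  have "w2 0 > 0" "a 0 > 0" using flux_pos[OF sol2 zero(2)] a_pos_interior[OF zero(2)] by auto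
  define D where "D t = X2 t - X1 t" for t
  have "(D has_real_derivative a (X2 0) / w2 (X2 0) - a (X1 0) / w1 (X1 0)) (at 0)"
    unfolding D_def X1_def X2_def by (intro DERIV_diff inv_sol_deriv sol1 sol2 zero)
  moreover have "0 < a (X2 0) / w2 (X2 0) - a (X1 0) / w1 (X1 0)"
    unfolding X0 using \<open>\<not> w1 0 \<le> w2 0\<close> \<open>w2 0 > 0\<close> \<open>a 0 > 0\<close>
    by (simp add: divide_strict_left_mono)
  ultimately obtain d1 where d1: "d1 > 0" "\<forall>h>0. h < d1 \<longrightarrow> D 0 < D (0 + h)"
    using DERIV_pos_inc_right by blast
  define Q where "Q t = (w1 (X1 t))\<^sup>2 - (w2 (X2 t))\<^sup>2" for t
  have "isCont Q 0" unfolding Q_def X1_def X2_def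
    by (rule DERIV_isCont[OF DERIV_diff[OF flux_sq_inv_sol_deriv[OF sol1 zero(3)]
        flux_sq_inv_sol_deriv[OF sol2 zero(3)]]])
  moreover have "Q 0 > 0" unfolding Q_def X0 using \<open>\<not> w1 0 \<le> w2 0\<close> \<open>w2 0 > 0\<close>
    by (simp add: power_strict_mono)
  ultimately obtain d2 where d2: "d2 > 0" "\<forall>h. dist h 0 < d2 \<longrightarrow> dist (Q h) (Q 0) < Q 0"
    unfolding continuous_at_eps_delta by blast
  define h where "h = min (min d1 d2) m / 2"
  have h: "0 < h" "h < d1" "h < d2" "h < m" unfolding h_def using d1 d2 m_pos by auto
  have "0 \<le> X1 h" using inv_sol_mono[OF sol1, of 0 h] X0 h unfolding X1_def by simp
  moreover have "X1 h < X2 h" using d1(2) h X0 unfolding D_def by simp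
  moreover have "(w2 (X2 h))\<^sup>2 \<le> (w1 (X1 h))\<^sup>2"
    using d2(2) h unfolding Q_def dist_real_def by (smt (verit))
  ultimately show False
    using inv_sol_comparison[OF sol1 sol2 h(1) h(4)] unfolding X1_def X2_def by simp
qed

lemma bvp_solution_unique:
  assumes sol1: "bvp_solution u1 w1" and sol2: "bvp_solution u2 w2" and x: "x \<in> {-L..L}"
  shows "u1 x = u2 x"
proof (cases "x \<in> {-L<..<L}")
  case True
  have u: "continuous_on {-L..L} u1" "continuous_on {-L..L} u2"
    and sys: "flux_system u1 w1 (\<lambda>x. - g x)" "flux_system u2 w2 (\<lambda>x. - g x)"
    using sol1 sol2 unfolding bvp_solution_def by auto
  obtain K where "K-lipschitz_on (u1 ` {-L..L} \<union> u2 ` {-L..L}) (\<lambda>x. - g x)"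
    by (rule lipschitz_on_images[OF u])
  moreover have "0 \<in> {-L<..<L}" using L_pos by simp
  moreover have "u1 0 = u2 0" using bvp_solution_center[OF sol1] bvp_solution_center[OF sol2]
    by simp
  moreover have "w1 0 = w2 0"
    using bvp_solution_center_flux_le[OF sol1 sol2] bvp_solution_center_flux_le[OF sol2 sol1]
      by simp
  moreover have "u1 ` {-L<..<L} \<subseteq> u1 ` {-L..L} \<union> u2 ` {-L..L}"
    "u2 ` {-L<..<L} \<subseteq> u1 ` {-L..L} \<union> u2 ` {-L..L}" by auto
  ultimately show ?thesis using flux_system_unique[OF sys, of K _ 0 x] True by simp
next
  case False
  then show ?thesis using x sol1 sol2 unfolding bvp_solution_def by auto
qed

section \<open>Existence by shooting\<close>

text \<open>Outside [-m, m] the nonlinearity is frozen at its boundary values, which vanish since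
  g(m) = g(-m) = 0. This makes it globally Lipschitz and bounded without changing solutions that
  stay in [-m, m].\<close>
definition f_trunc :: "real \<Rightarrow> real" where
  "f_trunc y = - g (max (-m) (min m y))"

lemma f_trunc_eq: "y \<in> {-m..m} \<Longrightarrow> f_trunc y = - g y"
  unfolding f_trunc_def by simp

lemma f_trunc_outside: "m \<le> \<bar>y\<bar> \<Longrightarrow> f_trunc y = 0"
  using g_m g_minus_m m_pos unfolding f_trunc_def by (cases "y \<ge> 0") auto

lemma f_trunc_continuous: "continuous_on UNIV f_trunc"
  unfolding f_trunc_def[abs_def]
  by (intro continuous_intros continuous_on_compose2[OF g_cont]) auto

lemma f_trunc_lipschitz:
  obtains K where "K-lipschitz_on UNIV f_trunc"
proof -
  obtain K where K: "K-lipschitz_on {-m..m} (\<lambda>x. - g x)"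
    using loc_lipschitz_imp_lipschitz_on_compact[OF f_lip compact_Icc] .
  have "1-lipschitz_on UNIV (\<lambda>y. max (-m) (min m y))"
    by (rule lipschitz_onI) (auto simp: dist_real_def)
  moreover have "K-lipschitz_on ((\<lambda>y. max (-m) (min m y)) ` UNIV) (\<lambda>x. - g x)"
    by (rule lipschitz_on_subset[OF K]) (use m_pos in auto)
  ultimately have "(K * 1)-lipschitz_on UNIV f_trunc"
    unfolding f_trunc_def[abs_def] by (rule lipschitz_on_compose2)
  then show ?thesis using that by simp
qed

lemma f_trunc_bounded:
  obtains B where "\<And>y. \<bar>f_trunc y\<bar> \<le> B"
proof -
  have "compact ((\<lambda>x. - g x) ` {-m..m})"
    by (intro compact_continuous_image continuous_intros continuous_on_subset[OF g_cont]) auto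
  then obtain B where "\<forall>z\<in>(\<lambda>x. - g x) ` {-m..m}. \<bar>z\<bar> \<le> B"
    by (metis compact_imp_bounded bounded_iff real_norm_def)
  moreover have "f_trunc y \<in> (\<lambda>x. - g x) ` {-m..m}" for y
    unfolding f_trunc_def using m_pos by auto
  ultimately show ?thesis using that by blast
qed

text \<open>Integral form of the truncated initial value problem u(-L) = -m, (a u')(-L) = s.\<close>
definition flux_op :: "real \<Rightarrow> (real \<Rightarrow> real) \<Rightarrow> real \<Rightarrow> real" where
  "flux_op s v t = s - integral {-L..t} (\<lambda>r. a r * f_trunc (v r))"

definition shoot_op :: "real \<Rightarrow> (real \<Rightarrow> real) \<Rightarrow> real \<Rightarrow> real" where
  "shoot_op s v x = - m + integral {-L..x} (\<lambda>t. flux_op s v t / a t)"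

lemma flux_integrand_continuous:
  "continuous_on {-L..L} v \<Longrightarrow> continuous_on {-L..L} (\<lambda>r. a r * f_trunc (v r))"
  by (intro continuous_intros a_continuous continuous_on_compose2[OF f_trunc_continuous]) auto

lemma flux_op_continuous:
  "continuous_on {-L..L} v \<Longrightarrow> continuous_on {-L..L} (flux_op s v)"
  unfolding flux_op_def[abs_def]
  by (intro continuous_intros indefinite_integral_continuous_1 integrable_continuous_real
      flux_integrand_continuous)

lemma flux_op_deriv:
  assumes "continuous_on {-L..L} v" "x \<in> {-L<..<L}"
  shows "(flux_op s v has_real_derivative - (a x * f_trunc (v x))) (at x)"
  unfolding flux_op_def[abs_def]
  using DERIV_diff[OF DERIV_const
      integral_has_real_derivative_at[OF flux_integrand_continuous[OF assms(1)] assms(2)]]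
  by simp

lemma shoot_integrand_continuous:
  "continuous_on {-L..L} v \<Longrightarrow> continuous_on {-L..L} (\<lambda>t. flux_op s v t / a t)"
  using flux_op_continuous a_continuous a_pos by (intro continuous_intros) auto

lemma shoot_op_continuous:
  "continuous_on {-L..L} v \<Longrightarrow> continuous_on {-L..L} (shoot_op s v)"
  unfolding shoot_op_def[abs_def]
  by (intro continuous_intros indefinite_integral_continuous_1 integrable_continuous_real
      shoot_integrand_continuous)

lemma shoot_op_deriv:
  assumes "continuous_on {-L..L} v" "x \<in> {-L<..<L}"
  shows "(shoot_op s v has_real_derivative flux_op s v x / a x) (at x)"
proof -
  have "((\<lambda>x. - m + integral {-L..x} (\<lambda>t. flux_op s v t / a t)) has_real_derivative
      0 + flux_op s v x / a x) (at x)"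
    by (rule DERIV_add[OF DERIV_const
          integral_has_real_derivative_at[OF shoot_integrand_continuous[OF assms(1)] assms(2)]])
  then show ?thesis unfolding shoot_op_def[abs_def] by simp
qed

lemma flux_op_bound:
  assumes B: "\<And>y. \<bar>f_trunc y\<bar> \<le> B" and \<beta>: "\<And>x. x \<in> {-L..L} \<Longrightarrow> a x \<le> \<beta>"
    and v: "continuous_on {-L..L} v" and t: "t \<in> {-L..L}"
  shows "\<bar>flux_op s v t - s\<bar> \<le> 2 * L * \<beta> * B"
proof -
  have "norm (integral {-L..t} (\<lambda>r. a r * f_trunc (v r))) \<le> integral {-L..t} (\<lambda>_. \<beta> * B)"
  proof (rule integral_norm_bound_integral)
    show "(\<lambda>r. a r * f_trunc (v r)) integrable_on {-L..t}"
      by (rule integrable_continuous_real,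
          rule continuous_on_subset[OF flux_integrand_continuous[OF v]])
         (use t in auto)
    fix r assume "r \<in> {-L..t}"
    then have "0 < a r" "a r \<le> \<beta>" using a_pos \<beta> t by auto
    then show "norm (a r * f_trunc (v r)) \<le> \<beta> * B"
      using B[of "v r"] by (auto simp: abs_mult intro: mult_mono)
  qed (rule integrable_const_ivl)
  also have "\<dots> = (t + L) * (\<beta> * B)" using t by simp
  also have "\<dots> \<le> (2 * L) * (\<beta> * B)"
  proof (rule mult_right_mono)
    have "0 < a 0" "a 0 \<le> \<beta>" using a_pos \<beta>[of 0] L_pos by auto
    moreover have "0 \<le> B" using B[of 0] abs_ge_zero order_trans by blast
    ultimately show "0 \<le> \<beta> * B" by simp
  qed (use t in auto)
  finally show ?thesis unfolding flux_op_def by simp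
qed

lemma flux_op_dist:
  assumes K: "K-lipschitz_on UNIV f_trunc" and \<beta>: "\<And>x. x \<in> {-L..L} \<Longrightarrow> a x \<le> \<beta>" and "\<mu> > 0"
    and v: "continuous_on {-L..L} v1" "continuous_on {-L..L} v2" and "d \<ge> 0"
    and close: "\<And>r. r \<in> {-L..L} \<Longrightarrow> \<bar>v1 r - v2 r\<bar> \<le> exp (\<mu> * r) * d"
    and t: "t \<in> {-L..L}"
  shows "\<bar>flux_op s v1 t - flux_op s v2 t\<bar> \<le> \<beta> * K * d * exp (\<mu> * t) / \<mu>"
proof -
  have sub: "{-L..t} \<subseteq> {-L..L}" using t by auto
  have k: "continuous_on {-L..t} (\<lambda>r. a r * f_trunc (v1 r))"
    "continuous_on {-L..t} (\<lambda>r. a r * f_trunc (v2 r))"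
    using continuous_on_subset[OF flux_integrand_continuous sub] v by auto
  have "flux_op s v1 t - flux_op s v2 t =
      - integral {-L..t} (\<lambda>r. a r * f_trunc (v1 r) - a r * f_trunc (v2 r))"
    unfolding flux_op_def
    using integral_diff[OF integrable_continuous_real[OF k(1)] integrable_continuous_real[OF k(2)]]
    by simp
  moreover have "\<bar>integral {-L..t} (\<lambda>r. a r * f_trunc (v1 r) - a r * f_trunc (v2 r))\<bar>
      \<le> \<beta> * K * d * exp (\<mu> * t) / \<mu>"
  proof (rule integral_exp_bound[OF \<open>\<mu> > 0\<close>])
    have "0 < a 0" "a 0 \<le> \<beta>" using \<beta>[of 0] a_pos L_pos by auto
    then have "0 \<le> \<beta>" by simp
    then show "0 \<le> \<beta> * K * d" using lipschitz_on_nonneg[OF K] \<open>d \<ge> 0\<close> by simp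
    show "- L \<le> t" using t by simp
    show "continuous_on {-L..t} (\<lambda>r. a r * f_trunc (v1 r) - a r * f_trunc (v2 r))"
      by (rule continuous_on_diff[OF k])
    fix r assume "r \<in> {-L..t}"
    then have r: "r \<in> {-L..L}" using sub by auto
    have "0 < a r" using a_pos r by blast
    then have "\<bar>a r * f_trunc (v1 r) - a r * f_trunc (v2 r)\<bar>
        = a r * \<bar>f_trunc (v1 r) - f_trunc (v2 r)\<bar>"
      by (simp add: abs_mult flip: right_diff_distrib)
    also have "\<dots> \<le> \<beta> * (K * (exp (\<mu> * r) * d))"
    proof (rule mult_mono)
      have "\<bar>f_trunc (v1 r) - f_trunc (v2 r)\<bar> \<le> K * \<bar>v1 r - v2 r\<bar>"
        using lipschitz_onD[OF K, of "v1 r" "v2 r"] by (simp add: dist_real_def)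
      also have "\<dots> \<le> K * (exp (\<mu> * r) * d)"
        using close[OF r] lipschitz_on_nonneg[OF K] by (intro mult_left_mono)
      finally show "\<bar>f_trunc (v1 r) - f_trunc (v2 r)\<bar> \<le> K * (exp (\<mu> * r) * d)" .
    qed (use \<beta>[OF r] \<open>0 < a r\<close> \<open>0 \<le> \<beta>\<close> in auto)
    finally show "\<bar>a r * f_trunc (v1 r) - a r * f_trunc (v2 r)\<bar> \<le> \<beta> * K * d * exp (\<mu> * r)"
      by (simp add: mult_ac)
  qed
  ultimately show ?thesis by simp
qed

lemma shoot_op_dist:
  assumes K: "K-lipschitz_on UNIV f_trunc"
    and ab: "0 < \<alpha>" "\<And>x. x \<in> {-L..L} \<Longrightarrow> \<alpha> \<le> a x \<and> a x \<le> \<beta>" and "\<mu> > 0"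
    and v: "continuous_on {-L..L} v1" "continuous_on {-L..L} v2" and "d \<ge> 0"
    and close: "\<And>r. r \<in> {-L..L} \<Longrightarrow> \<bar>v1 r - v2 r\<bar> \<le> exp (\<mu> * r) * d"
    and y: "y \<in> {-L..L}"
  shows "\<bar>shoot_op s v1 y - shoot_op s v2 y\<bar> \<le> \<beta> * K * d / (\<alpha> * \<mu>) * exp (\<mu> * y) / \<mu>"
proof -
  have sub: "{-L..y} \<subseteq> {-L..L}" using y by auto
  have k: "continuous_on {-L..y} (\<lambda>t. flux_op s v1 t / a t)"
    "continuous_on {-L..y} (\<lambda>t. flux_op s v2 t / a t)"
    using continuous_on_subset[OF shoot_integrand_continuous sub] v by auto
  have "shoot_op s v1 y - shoot_op s v2 y =
      integral {-L..y} (\<lambda>t. flux_op s v1 t / a t - flux_op s v2 t / a t)"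
    unfolding shoot_op_def
    using integral_diff[OF integrable_continuous_real[OF k(1)] integrable_continuous_real[OF k(2)]]
    by simp
  moreover have "\<bar>integral {-L..y} (\<lambda>t. flux_op s v1 t / a t - flux_op s v2 t / a t)\<bar>
      \<le> \<beta> * K * d / (\<alpha> * \<mu>) * exp (\<mu> * y) / \<mu>"
  proof (rule integral_exp_bound[OF \<open>\<mu> > 0\<close>])
    have "\<alpha> \<le> a 0 \<and> a 0 \<le> \<beta>" using ab(2)[of 0] L_pos by simp
    then have "0 \<le> \<beta>" using ab(1) by linarith
    then show "0 \<le> \<beta> * K * d / (\<alpha> * \<mu>)"
      using lipschitz_on_nonneg[OF K] \<open>d \<ge> 0\<close> ab(1) \<open>\<mu> > 0\<close> by simp
    show "- L \<le> y" using y by simp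
    show "continuous_on {-L..y} (\<lambda>t. flux_op s v1 t / a t - flux_op s v2 t / a t)"
      by (rule continuous_on_diff[OF k])
    fix t assume "t \<in> {-L..y}"
    then have t: "t \<in> {-L..L}" using sub by auto
    have "0 < a t" using ab(1) ab(2)[OF t] by linarith
    then have "\<bar>flux_op s v1 t / a t - flux_op s v2 t / a t\<bar>
        = \<bar>flux_op s v1 t - flux_op s v2 t\<bar> / a t"
      by (simp only: diff_divide_distrib[symmetric] abs_divide abs_of_pos)
    also have "\<dots> \<le> (\<beta> * K * d * exp (\<mu> * t) / \<mu>) / \<alpha>"
    proof (rule frac_le)
      show "\<bar>flux_op s v1 t - flux_op s v2 t\<bar> \<le> \<beta> * K * d * exp (\<mu> * t) / \<mu>"
        using ab(2) by (intro flux_op_dist[OF K _ \<open>\<mu> > 0\<close> v \<open>d \<ge> 0\<close> close t]) blast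
      then show "0 \<le> \<beta> * K * d * exp (\<mu> * t) / \<mu>" by (meson abs_ge_zero order_trans)
      show "0 < \<alpha>" "\<alpha> \<le> a t" using ab(1) ab(2)[OF t] by auto
    qed
    also have "\<dots> = \<beta> * K * d / (\<alpha> * \<mu>) * exp (\<mu> * t)" by simp
    finally show "\<bar>flux_op s v1 t / a t - flux_op s v2 t / a t\<bar>
        \<le> \<beta> * K * d / (\<alpha> * \<mu>) * exp (\<mu> * t)" .
  qed
  ultimately show ?thesis by simp
qed

lemma shoot_op_param_dist:
  assumes \<alpha>: "0 < \<alpha>" "\<And>x. x \<in> {-L..L} \<Longrightarrow> \<alpha> \<le> a x"
    and v: "continuous_on {-L..L} v" and y: "y \<in> {-L..L}"
  shows "\<bar>shoot_op s v y - shoot_op s' v y\<bar> \<le> 2 * L * \<bar>s - s'\<bar> / \<alpha>"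
proof -
  have sub: "{-L..y} \<subseteq> {-L..L}" using y by auto
  have k: "continuous_on {-L..y} (\<lambda>t. flux_op \<sigma> v t / a t)" for \<sigma>
    using continuous_on_subset[OF shoot_integrand_continuous sub] v by auto
  have "shoot_op s v y - shoot_op s' v y
      = integral {-L..y} (\<lambda>t. flux_op s v t / a t - flux_op s' v t / a t)"
    unfolding shoot_op_def
      using integral_diff[OF integrable_continuous_real[OF k] integrable_continuous_real[OF k]]
    by simp
  also have "\<dots> = integral {-L..y} (\<lambda>t. (s - s') / a t)"
    unfolding flux_op_def by (simp add: diff_divide_distrib)
  finally have "\<bar>shoot_op s v y - shoot_op s' v y\<bar> = norm (integral {-L..y} (\<lambda>t. (s - s') / a t))"
    by simp
  also have "\<dots> \<le> integral {-L..y} (\<lambda>_. \<bar>s - s'\<bar> / \<alpha>)"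
  proof (rule integral_norm_bound_integral)
    have "a t \<noteq> 0" if "t \<in> {-L..y}" for t
      using a_pos[rule_format, of t] subsetD[OF sub that] by simp
    then show "(\<lambda>t. (s - s') / a t) integrable_on {-L..y}"
      using continuous_on_subset[OF a_continuous sub]
      by (intro integrable_continuous_real continuous_intros) auto
    fix t assume "t \<in> {-L..y}"
    then have "\<alpha> \<le> a t" using \<alpha>(2) sub by auto
    then show "norm ((s - s') / a t) \<le> \<bar>s - s'\<bar> / \<alpha>"
      using \<alpha>(1) by (simp add: divide_left_mono)
  qed (rule integrable_const_ivl)
  also have "\<dots> = (y + L) * (\<bar>s - s'\<bar> / \<alpha>)" using y by simp
  also have "\<dots> \<le> (2 * L) * (\<bar>s - s'\<bar> / \<alpha>)"
    using y \<alpha>(1) by (intro mult_right_mono) auto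
  finally show ?thesis by simp
qed

definition clamp_L :: "real \<Rightarrow> real" where
  "clamp_L x = max (-L) (min L x)"

lemma clamp_L_in: "clamp_L x \<in> {-L..L}" and clamp_L_id: "x \<in> {-L..L} \<Longrightarrow> clamp_L x = x"
  unfolding clamp_L_def using L_pos by auto

lemma clamp_L_bcontfun:
  assumes "continuous_on {-L..L} H"
  shows "(\<lambda>x. H (clamp_L x)) \<in> bcontfun"
proof -
  have "continuous_on UNIV (\<lambda>x. H (clamp_L x))"
    unfolding clamp_L_def
      by (rule continuous_on_compose2[OF assms]) (use L_pos in \<open>auto intro!: continuous_intros\<close>)
  moreover have "bounded (range (\<lambda>x. H (clamp_L x)))"
    by (rule bounded_subset[OF
          compact_imp_bounded[OF compact_continuous_image[OF assms compact_Icc]]])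
       (use clamp_L_in in auto)
  ultimately show ?thesis unfolding bcontfun_def by simp
qed

text \<open>Bielecki's weighted norm: a function v on [-L, L] is represented by the bounded
  continuous function exp(-\<mu> x) v x, extended constantly beyond the endpoints. For large \<mu> the
  integral operator shoot_op s becomes a contraction in this norm.\<close>
definition unweight :: "real \<Rightarrow> (real \<Rightarrow>\<^sub>C real) \<Rightarrow> real \<Rightarrow> real" where
  "unweight \<mu> \<phi> x = exp (\<mu> * x) * apply_bcontfun \<phi> x"

definition weighted_op :: "real \<Rightarrow> real \<Rightarrow> (real \<Rightarrow>\<^sub>C real) \<Rightarrow> (real \<Rightarrow>\<^sub>C real)" where
  "weighted_op \<mu> s \<phi> = Bcontfun (\<lambda>x. shoot_op s (unweight \<mu> \<phi>) (clamp_L x) / exp (\<mu> * clamp_L x))"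

lemma unweight_continuous: "continuous_on {-L..L} (unweight \<mu> \<phi>)"
  unfolding unweight_def[abs_def]
    by (intro continuous_intros continuous_on_subset[OF continuous_on_apply_bcontfun]) auto

lemma weighted_op_apply:
  "apply_bcontfun (weighted_op \<mu> s \<phi>) x
    = shoot_op s (unweight \<mu> \<phi>) (clamp_L x) / exp (\<mu> * clamp_L x)"
proof -
  have "continuous_on {-L..L} (\<lambda>y. shoot_op s (unweight \<mu> \<phi>) y / exp (\<mu> * y))"
    by (intro continuous_intros shoot_op_continuous unweight_continuous) auto
  from Bcontfun_inverse[OF clamp_L_bcontfun[OF this]] show ?thesis
    unfolding weighted_op_def by simp
qed

lemma weighted_op_contraction:
  assumes K: "K-lipschitz_on UNIV f_trunc"
    and ab: "0 < \<alpha>" "\<And>x. x \<in> {-L..L} \<Longrightarrow> \<alpha> \<le> a x \<and> a x \<le> \<beta>" and "\<mu> > 0"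
    and small: "\<beta> * K / (\<alpha> * \<mu>\<^sup>2) \<le> 1 / 2"
  shows "dist (weighted_op \<mu> s \<phi>1) (weighted_op \<mu> s \<phi>2) \<le> 1 / 2 * dist \<phi>1 \<phi>2"
proof (rule dist_bound)
  fix x
  define d where "d = dist \<phi>1 \<phi>2"
  define y where "y = clamp_L x"
  have y: "y \<in> {-L..L}" unfolding y_def by (rule clamp_L_in)
  have close: "\<bar>unweight \<mu> \<phi>1 r - unweight \<mu> \<phi>2 r\<bar> \<le> exp (\<mu> * r) * d" for r
  proof -
    have "\<bar>unweight \<mu> \<phi>1 r - unweight \<mu> \<phi>2 r\<bar> = exp (\<mu> * r) * dist (\<phi>1 r) (\<phi>2 r)"
      unfolding unweight_def dist_real_def by (simp add: abs_mult flip: right_diff_distrib)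
    also have "\<dots> \<le> exp (\<mu> * r) * d" unfolding d_def by (simp add: dist_bounded)
    finally show ?thesis .
  qed
  have "dist (weighted_op \<mu> s \<phi>1 x) (weighted_op \<mu> s \<phi>2 x)
      = \<bar>shoot_op s (unweight \<mu> \<phi>1) y - shoot_op s (unweight \<mu> \<phi>2) y\<bar> / exp (\<mu> * y)"
    unfolding weighted_op_apply y_def[symmetric] dist_real_def by (simp flip: diff_divide_distrib)
  also have "\<dots> \<le> (\<beta> * K * d / (\<alpha> * \<mu>) * exp (\<mu> * y) / \<mu>) / exp (\<mu> * y)"
    using shoot_op_dist[OF K ab \<open>\<mu> > 0\<close> unweight_continuous unweight_continuous _ close y]
    by (intro divide_right_mono) (simp_all add: d_def)
  also have "\<dots> = \<beta> * K / (\<alpha> * \<mu>\<^sup>2) * d" by (simp add: power2_eq_square)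
  also have "\<dots> \<le> 1 / 2 * d" using small by (intro mult_right_mono) (simp_all add: d_def)
  finally show "dist (weighted_op \<mu> s \<phi>1 x) (weighted_op \<mu> s \<phi>2 x) \<le> 1 / 2 * dist \<phi>1 \<phi>2"
    unfolding d_def .
qed

lemma weighted_op_param_dist:
  assumes \<alpha>: "0 < \<alpha>" "\<And>x. x \<in> {-L..L} \<Longrightarrow> \<alpha> \<le> a x" and "\<mu> > 0"
  shows "dist (weighted_op \<mu> s \<phi>) (weighted_op \<mu> s' \<phi>) \<le> 2 * L * exp (\<mu> * L) / \<alpha> * \<bar>s - s'\<bar>"
proof (rule dist_bound)
  fix x
  define y where "y = clamp_L x"
  have y: "y \<in> {-L..L}" unfolding y_def by (rule clamp_L_in)
  have "dist (weighted_op \<mu> s \<phi> x) (weighted_op \<mu> s' \<phi> x)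
      = \<bar>shoot_op s (unweight \<mu> \<phi>) y - shoot_op s' (unweight \<mu> \<phi>) y\<bar> * exp (- (\<mu> * y))"
    unfolding weighted_op_apply y_def[symmetric] dist_real_def
    by (simp add: exp_minus field_simps flip: diff_divide_distrib)
  also have "\<dots> \<le> (2 * L * \<bar>s - s'\<bar> / \<alpha>) * exp (\<mu> * L)"
  proof (rule mult_mono)
    have "0 \<le> \<mu> * (L + y)" using \<open>\<mu> > 0\<close> y by simp
    then show "exp (- (\<mu> * y)) \<le> exp (\<mu> * L)" by (simp add: algebra_simps)
  qed (use shoot_op_param_dist[OF \<alpha> unweight_continuous y] L_pos \<alpha>(1) in auto)
  finally show "dist (weighted_op \<mu> s \<phi> x) (weighted_op \<mu> s' \<phi> x)
      \<le> 2 * L * exp (\<mu> * L) / \<alpha> * \<bar>s - s'\<bar>"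
    by (simp add: field_simps)
qed

lemma weighted_op_contraction_exists:
  obtains \<mu> where "\<mu> > 0"
    and "\<And>s \<phi>1 \<phi>2. dist (weighted_op \<mu> s \<phi>1) (weighted_op \<mu> s \<phi>2) \<le> 1 / 2 * dist \<phi>1 \<phi>2"
proof -
  obtain K where K: "K-lipschitz_on UNIV f_trunc" by (rule f_trunc_lipschitz)
  obtain \<alpha> \<beta> where ab: "0 < \<alpha>" "\<And>x. x \<in> {-L..L} \<Longrightarrow> \<alpha> \<le> a x \<and> a x \<le> \<beta>"
    by (rule a_bounds) blast
  have "\<alpha> \<le> \<beta>" using ab(2)[of 0] L_pos by auto
  then have "0 \<le> 2 * \<beta> * K" using ab(1) lipschitz_on_nonneg[OF K] by simp
  then have q: "0 \<le> 2 * \<beta> * K / \<alpha>" using ab(1) by simp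
  define \<mu> where "\<mu> = sqrt (2 * \<beta> * K / \<alpha>) + 1"
  have "\<mu> > 0" unfolding \<mu>_def using q by (simp add: add_nonneg_pos)
  have "2 * \<beta> * K / \<alpha> = (sqrt (2 * \<beta> * K / \<alpha>))\<^sup>2" using q by simp
  also have "\<dots> \<le> \<mu>\<^sup>2" unfolding \<mu>_def using q by (intro power_mono) auto
  finally have "\<beta> * K / (\<alpha> * \<mu>\<^sup>2) \<le> 1 / 2"
    using ab(1) \<open>\<mu> > 0\<close> by (simp add: field_simps)
  with weighted_op_contraction[OF K ab \<open>\<mu> > 0\<close>] \<open>\<mu> > 0\<close> show ?thesis using that by blast
qed

lemma truncated_ivp_family:
  obtains V :: "real \<Rightarrow> real \<Rightarrow> real"
  where "\<And>s. continuous_on {-L..L} (V s)" "\<And>s x. x \<in> {-L..L} \<Longrightarrow> V s x = shoot_op s (V s) x"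
    and "continuous_on UNIV (\<lambda>s. V s L)"
proof -
  obtain \<mu> where "\<mu> > 0"
    and contraction: "\<And>s \<phi>1 \<phi>2. dist (weighted_op \<mu> s \<phi>1) (weighted_op \<mu> s \<phi>2) \<le> 1 / 2 * dist \<phi>1 \<phi>2"
    by (rule weighted_op_contraction_exists) blast
  obtain \<alpha> \<beta> where ab: "0 < \<alpha>" "\<And>x. x \<in> {-L..L} \<Longrightarrow> \<alpha> \<le> a x \<and> a x \<le> \<beta>"
    by (rule a_bounds) blast
  have "\<exists>\<phi>. weighted_op \<mu> s \<phi> = \<phi>" for s
    using banach_fix_type[of "1 / 2" "weighted_op \<mu> s"] contraction by auto
  then obtain \<Phi> where \<Phi>: "\<And>s. weighted_op \<mu> s (\<Phi> s) = \<Phi> s" by metis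
  define M where "M = 2 * L * exp (\<mu> * L) / \<alpha>"
  have \<Phi>_dist: "dist (\<Phi> s) (\<Phi> s') \<le> 2 * M * dist s s'" for s s'
    using fixed_points_dist_le[of "weighted_op \<mu>", OF \<Phi> \<Phi> _ contraction
        weighted_op_param_dist[OF ab(1) _ \<open>\<mu> > 0\<close>]] ab(2)
    by (simp add: M_def dist_real_def mult.assoc)
  define V where "V s = unweight \<mu> (\<Phi> s)" for s
  show ?thesis
  proof (rule that)
    show "continuous_on {-L..L} (V s)" for s unfolding V_def by (rule unweight_continuous)
    show "V s x = shoot_op s (V s) x" if "x \<in> {-L..L}" for s x
      using arg_cong[OF \<Phi>[of s], of "\<lambda>\<phi>. unweight \<mu> \<phi> x"]
      unfolding unweight_def weighted_op_apply clamp_L_id[OF that] V_def by simp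
    have "(exp (\<mu> * L) * (2 * M))-lipschitz_on UNIV (\<lambda>s. V s L)"
    proof (rule lipschitz_onI)
      fix s s' :: real
      have "dist (V s L) (V s' L) = exp (\<mu> * L) * dist (\<Phi> s L) (\<Phi> s' L)"
        unfolding V_def unweight_def dist_real_def by (simp add: abs_mult flip: right_diff_distrib)
      also have "\<dots> \<le> exp (\<mu> * L) * (2 * M * dist s s')"
        using order_trans[OF dist_bounded \<Phi>_dist] by (intro mult_left_mono) auto
      finally show "dist (V s L) (V s' L) \<le> exp (\<mu> * L) * (2 * M) * dist s s'" by simp
      show "0 \<le> exp (\<mu> * L) * (2 * M)" unfolding M_def using ab(1) L_pos by simp
    qed
    then show "continuous_on UNIV (\<lambda>s. V s L)" by (rule lipschitz_on_continuous_on)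
  qed
qed

text \<open>The flux of the truncated problem stays within C of its initial value s, so s = C + m \<beta> / L
  overshoots the boundary value m at L and s = -C undershoots it.\<close>
lemma shooting_hits_m:
  assumes V: "\<And>s. continuous_on {-L..L} (V s)" "\<And>s x. x \<in> {-L..L} \<Longrightarrow> V s x = shoot_op s (V s) x"
    and V_cont: "continuous_on UNIV (\<lambda>s. V s L)"
  obtains s where "V s L = m"
proof -
  obtain \<alpha> \<beta> where ab: "0 < \<alpha>" "\<And>x. x \<in> {-L..L} \<Longrightarrow> \<alpha> \<le> a x \<and> a x \<le> \<beta>"
    by (rule a_bounds) blast
  obtain B where B: "\<And>y. \<bar>f_trunc y\<bar> \<le> B" by (rule f_trunc_bounded) blast
  define C where "C = 2 * L * \<beta> * B"
  have flux: "\<bar>flux_op s (V s) t - s\<bar> \<le> C" if "t \<in> {-L..L}" for s t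
    unfolding C_def using ab(2) by (intro flux_op_bound[OF B _ V(1) that]) blast
  have V_L: "V s L = - m + integral {-L..L} (\<lambda>t. flux_op s (V s) t / a t)" for s
    using V(2)[of L s] L_pos unfolding shoot_op_def by simp
  have int: "(\<lambda>t. flux_op s (V s) t / a t) integrable_on {-L..L}" for s
    by (rule integrable_continuous_real[OF shoot_integrand_continuous[OF V(1)]])
  have "0 < \<alpha>" "\<alpha> \<le> \<beta>" using ab(1) ab(2)[of 0] L_pos by auto
  define s_hi where "s_hi = C + m * \<beta> / L"
  have "2 * m \<le> integral {-L..L} (\<lambda>t. flux_op s_hi (V s_hi) t / a t)"
  proof -
    have "integral {-L..L} (\<lambda>_. m / L) \<le> integral {-L..L} (\<lambda>t. flux_op s_hi (V s_hi) t / a t)"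
    proof (rule integral_le[OF integrable_const_ivl int])
      fix t assume t: "t \<in> {-L..L}"
      have "m * \<beta> / L \<le> flux_op s_hi (V s_hi) t" using flux[OF t, of s_hi]
        unfolding s_hi_def abs_le_iff by linarith
      moreover have "0 < a t" "a t \<le> \<beta>" using ab(1) ab(2)[OF t] by auto
      moreover have "0 < m * \<beta> / L" using m_pos L_pos \<open>0 < \<alpha>\<close> \<open>\<alpha> \<le> \<beta>\<close> by simp
      ultimately have "(m * \<beta> / L) / \<beta> \<le> flux_op s_hi (V s_hi) t / a t"
        by (intro frac_le) auto
      then show "m / L \<le> flux_op s_hi (V s_hi) t / a t" using \<open>0 < \<alpha>\<close> \<open>\<alpha> \<le> \<beta>\<close> by simp
    qed
    then show ?thesis using L_pos by simp
  qed
  then have hi: "m \<le> V s_hi L" using V_L by simp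
  have "integral {-L..L} (\<lambda>t. flux_op (- C) (V (- C)) t / a t) \<le> integral {-L..L} (\<lambda>_. 0)"
  proof (rule integral_le[OF int integrable_const_ivl])
    fix t assume t: "t \<in> {-L..L}"
    then have "flux_op (- C) (V (- C)) t \<le> 0" "0 < a t"
      using flux[OF t, of "- C"] ab(1) ab(2)[OF t] by auto
    then show "flux_op (- C) (V (- C)) t / a t \<le> 0" by (simp add: divide_nonpos_pos)
  qed
  then have lo: "V (- C) L \<le> m" using V_L m_pos by simp
  have "- C \<le> s_hi" unfolding s_hi_def C_def using B[of 0] L_pos m_pos \<open>0 < \<alpha>\<close> \<open>\<alpha> \<le> \<beta>\<close>
    by (smt (verit) abs_ge_zero divide_nonneg_pos mult_nonneg_nonneg)
  then show ?thesis using IVT'[of "\<lambda>s. V s L" "- C" m s_hi] lo hi V_cont that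
    by (auto intro: continuous_on_subset)
qed

text \<open>At an interior extremum outside [-m, m] both the flux and the truncated nonlinearity vanish,
  so the solution would be constant.\<close>
lemma truncated_solution_range:
  assumes u: "continuous_on {-L..L} u" "u L = m" "u (-L) = - m"
    and sys: "flux_system u w f_trunc" and x: "x \<in> {-L..L}"
  shows "u x \<in> {-m..m}"
proof -
  have critical: "w x1 = 0"
    if x1: "x1 \<in> {-L<..<L}" and extr: "(\<forall>y\<in>{-L..L}. u y \<le> u x1) \<or> (\<forall>y\<in>{-L..L}. u x1 \<le> u y)" for x1
  proof -
    define d where "d = min (x1 + L) (L - x1)"
    have "0 < d" "\<And>y. \<bar>x1 - y\<bar> < d \<Longrightarrow> y \<in> {-L..L}" using x1 unfolding d_def by auto
    then have "w x1 / a x1 = 0"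
      using extr DERIV_local_max[OF flux_systemD(1)[OF sys x1]]
        DERIV_local_min[OF flux_systemD(1)[OF sys x1]]
      by blast
    then show ?thesis using a_pos_interior[OF x1] by simp
  qed
  have no_overshoot: "\<bar>u x1\<bar> \<le> m"
    if "x1 \<in> {-L..L}" "(\<forall>y\<in>{-L..L}. u y \<le> u x1) \<or> (\<forall>y\<in>{-L..L}. u x1 \<le> u y)" for x1
  proof (rule ccontr)
    assume "\<not> \<bar>u x1\<bar> \<le> m"
    then have x1: "x1 \<in> {-L<..<L}" using that(1) u(2,3) m_pos by (cases "x1 = L \<or> x1 = -L") auto
    obtain K where "K-lipschitz_on UNIV f_trunc" by (rule f_trunc_lipschitz)
    then have "K-lipschitz_on (u ` {-L..L}) f_trunc" by (rule lipschitz_on_subset) simp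
    moreover have "f_trunc (u x1) = 0" using \<open>\<not> \<bar>u x1\<bar> \<le> m\<close> by (intro f_trunc_outside) simp
    ultimately have "u y = u x1" if "y \<in> {-L..L}" for y
      using flux_zero_imp_constant[OF u(1) sys _ x1 critical[OF x1 \<open>_ \<or> _\<close>] _ that] by blast
    then have "u L = u (-L)" using L_pos by simp
    then show False using u(2,3) m_pos by simp
  qed
  have ne: "{-L..L} \<noteq> {}" using L_pos by simp
  obtain xM xm where "xM \<in> {-L..L}" "\<forall>y\<in>{-L..L}. u y \<le> u xM" "xm \<in> {-L..L}" "\<forall>y\<in>{-L..L}. u xm \<le> u y"
    using continuous_attains_sup[OF compact_Icc ne u(1)]
      continuous_attains_inf[OF compact_Icc ne u(1)] by metis
  then show ?thesis using no_overshoot[of xM] no_overshoot[of xm] x by fastforce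
qed

lemma bvp_solution_exists: "\<exists>u w. bvp_solution u w"
proof -
  obtain V where V: "\<And>s. continuous_on {-L..L} (V s)"
      "\<And>s x. x \<in> {-L..L} \<Longrightarrow> V s x = shoot_op s (V s) x"
    and "continuous_on UNIV (\<lambda>s. V s L)"
    by (rule truncated_ivp_family) blast
  then obtain s where "V s L = m" by (rule shooting_hits_m)
  define u w where "u = V s" and "w = flux_op s u"
  have u: "continuous_on {-L..L} u" "u L = m" "u (-L) = - m"
    using V(1) \<open>V s L = m\<close> V(2)[of "-L" s] L_pos unfolding u_def by (simp_all add: shoot_op_def)
  have sys: "flux_system u w f_trunc"
    unfolding flux_system_def
  proof
    fix x assume x: "x \<in> {-L<..<L}"
    have "(u has_real_derivative w x / a x) (at x)" unfolding w_def
      by (rule has_field_derivative_transform_within_open[OF shoot_op_deriv[OF u(1) x],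
            where S="{-L<..<L}"])
         (use x V(2) in \<open>auto simp: u_def\<close>)
    with flux_op_deriv[OF u(1) x]
    show "(u has_real_derivative w x / a x) (at x) \<and>
        (w has_real_derivative - (a x * f_trunc (u x))) (at x)"
      unfolding w_def by simp
  qed
  have "flux_system u w (\<lambda>x. - g x)"
    using sys f_trunc_eq truncated_solution_range[OF u sys] unfolding flux_system_def by auto
  then show ?thesis using u unfolding bvp_solution_def by blast
qed

end

theorem theorem1p2:
  fixes L m :: real and a a' G g :: "real \<Rightarrow> real"
  assumes L_pos: "L > 0" and m_pos: "m > 0"
    and a_pos: "\<forall>x\<in>{-L..L}. a x > 0"
    and a_even: "\<forall>x\<in>{-L..L}. a (- x) = a x"
    and a_deriv: "\<forall>x\<in>{-L..L}. (a has_real_derivative a' x) (at x within {-L..L})"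
    and a'_cont: "continuous_on {-L..L} a'"
    and G_nonneg: "\<forall>x. G x \<ge> 0"
    and G_even: "\<forall>x. G (- x) = G x"
    and G_deriv: "\<forall>x. (G has_real_derivative g x) (at x)"
    and g_cont: "continuous_on UNIV g"
    and f_lip: "loc_lipschitz (\<lambda>x. - g x)"
    and a'_nonneg: "\<forall>x\<in>{0<..<L}. a' x \<ge> 0"
    and G_min: "\<forall>x>0. G x \<ge> G m"
    and g_nonpos: "\<forall>x\<in>{0<..<m}. g x \<le> 0"
  shows "(\<exists>u. is_solution L m a (\<lambda>x. - g x) u \<and>
              (\<forall>v. is_solution L m a (\<lambda>x. - g x) v \<longrightarrow> (\<forall>x\<in>{-L..L}. v x = u x))) \<and>
         (\<forall>u. is_solution L m a (\<lambda>x. - g x) u \<longrightarrow>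
              (\<forall>x\<in>{-L..L}. u (- x) = - u x) \<and> strict_mono_on {-L..L} u)"
proof -
  interpret symmetric_bvp L m a a' G g
    using L_pos m_pos a_pos a_even a_deriv G_deriv G_even g_cont f_lip a'_nonneg G_min g_nonpos
    by unfold_locales auto
  obtain u w where sol: "bvp_solution u w" using bvp_solution_exists by blast
  have odd: "\<forall>x\<in>{-L..L}. v (- x) = - v x" if "bvp_solution v wv" for v wv
    using bvp_solution_unique[OF bvp_solution_reflect[OF that] that]
      by (simp add: minus_equation_iff)
  show ?thesis
    unfolding is_solution_iff_bvp_solution
    using sol bvp_solution_unique odd bvp_solution_strict_mono by blast
qed

end
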